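(* Consider the problem and the SC-SCSG algorithm described in the context, and suppose Assumptions (A2) and (A6) hold. Then at every inner iteration $k$ of epoch $s$, with $A=|\mathcal A|$ and $D=|\mathcal D_1|$, $$\mathbb{E}_{\mathcal A,\mathcal D_1}\|\hat G_k-G(x_k)\|^2\le 4\Big(\frac{\mathbb{I}(A<n)}{A}+\frac{\mathbb{I}(D<n)}{D}\Big)B_G^2\,\mathbb{E}\|x_k-\tilde x_s\|^2+2\frac{\mathbb{I}(D<n)}{D}H_1 .$$
   Context: Problem: minimize $f(x)=F(G(x))=\frac1n\sum_{i=1}^nF_i\big(\frac1n\sum_{j=1}^nG_j(x)\big)$ over $x\in\mathbb{R}^N$, where $G_j:\mathbb{R}^N\to\mathbb{R}^M$, $F_i:\mathbb{R}^M\to\mathbb{R}$, $G=\frac1n\sum_jG_j$, $F=\frac1n\sum_iF_i$, $\partial G_j(x)\in\mathbb{R}^{M\times N}$ is the Jacobian, so $\nabla f(x)=(\partial G(x))^\top\nabla F(G(x))$. For a multiset $\mathcal S$ of indices from $[n]$, $G_{\mathcal S}=\frac1{|\mathcal S|}\sum_{j\in\mathcal S}G_j$, and similarly $\partial G_{\mathcal S}$, $F_{\mathcal S}$. $\mathbb{I}(\cdot)$ is the indicator function. Algorithm (SC-SCSG): parameters $K$ (inner iterations), $S$ (epochs), step $\eta>0$, batch sizes $A\le D$, initial point $\tilde x_0$. For each epoch $s=0,\dots,S-1$: form $\mathcal D_1,\mathcal D_2$, each of $D$ indices sampled independently and uniformly from $[n]$ (independent of each other); set $\nabla\hat f_{\mathcal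 D}(\tilde x_s)=(\partial G_{\mathcal D_1}(\tilde x_s))^\top\nabla F_{\mathcal D_2}(G_{\mathcal D_1}(\tilde x_s))$ and $x_0=\tilde x_s$. For $k=0,\dots,K-1$: sample a mini-batch $\mathcal A$ of $A$ indices from $[n]$ (independent of $\mathcal D$), set $\hat G_k=G_{\mathcal A}(x_k)-G_{\mathcal A}(\tilde x_s)+G_{\mathcal D_1}(\tilde x_s)$; draw $i_k,j_k$ independently uniformly from $[n]$; set $\nabla\tilde f_k=(\partial G_{j_k}(x_k))^\top\nabla F_{i_k}(\hat G_k)-(\partial G_{j_k}(\tilde x_s))^\top\nabla F_{i_k}(G_{\mathcal D_1}(\tilde x_s))+\nabla\hat f_{\mathcal D}(\tilde x_s)$ and $x_{k+1}=x_k-\eta\nabla\tilde f_k$. Then $\tilde x_{s+1}=x_K$. Within an epoch $x_k$ denotes the $k$-th inner iterate of epoch $s$. (A2) For all $j$ and $x,y\in\mathbb{R}^N$: $\|\partial G_j(x)\|\le B_G$ (so $\|G_j(x)-G_j(y)\|\le B_G\|x-y\|$) and $\|\partial G_j(x)-\partial G_j(y)\|\le L_G\|x-y\|$. (A6) For all $x\in\mathbb{R}^N,y\in\mathbb{R}^M$: $\frac1n\sum_{i=1}^n\|G(x)-G_i(x)\|^2\le H_1$ and $\frac1{n^2}\sum_{i,j=1}^n\|(\partial G(x))^\top\nabla F(y)-(\partial G_j(x))^\top\nabla F_i(y)\|^2\le H_2$. *)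

theory Defs
  imports "HOL-Analysis.Analysis" "HOL-Probability.Probability"
begin

text \<open>Indices range over [n] = {0..<n}. Vectors in R^N are real^'n, in R^M real^'m;
  a Jacobian (M x N matrix) is real^'n^'m.\<close>

text \<open>Average over a multiset of indices given as a list: f_S = (1/|S|) sum_{j in S} f_j.\<close>
definition bavg :: "nat list \<Rightarrow> (nat \<Rightarrow> 'a::real_vector) \<Rightarrow> 'a" where
  "bavg S f = (1 / real (length S)) *\<^sub>R sum_list (map f S)"

definition favg :: "nat \<Rightarrow> (nat \<Rightarrow> 'a::real_vector) \<Rightarrow> 'a" where
  "favg n f = (1 / real n) *\<^sub>R (\<Sum>j<n. f j)"

fun iid_list :: "nat \<Rightarrow> 'a pmf \<Rightarrow> 'a list pmf" where
  "iid_list 0 p = return_pmf []"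
| "iid_list (Suc m) p = bind_pmf p (\<lambda>x. map_pmf (\<lambda>xs. x # xs) (iid_list m p))"

text \<open>Mini-batch of size m: m i.i.d. uniform indices from [n] when m < n; when m \<ge> n the
  full index set is used (this is the convention behind the indicator I(m<n)).\<close>
definition batch_pmf :: "nat \<Rightarrow> nat \<Rightarrow> nat list pmf" where
  "batch_pmf n m = (if m < n then iid_list m (pmf_of_set {..<n}) else return_pmf [0..<n])"

definition Ghat :: "(nat \<Rightarrow> real^'n \<Rightarrow> real^'m) \<Rightarrow> nat list \<Rightarrow> nat list
    \<Rightarrow> real^'n \<Rightarrow> real^'n \<Rightarrow> real^'m" where
  "Ghat G Ab D1 xt x = bavg Ab (\<lambda>l. G l x) - bavg Ab (\<lambda>l. G l xt) + bavg D1 (\<lambda>l. G l xt)"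

definition gradD :: "(nat \<Rightarrow> real^'n \<Rightarrow> real^'m) \<Rightarrow> (nat \<Rightarrow> real^'n \<Rightarrow> real^'n^'m)
    \<Rightarrow> (nat \<Rightarrow> real^'m \<Rightarrow> real^'m) \<Rightarrow> nat list \<Rightarrow> nat list \<Rightarrow> real^'n \<Rightarrow> real^'n" where
  "gradD G JG gF D1 D2 xt =
     transpose (bavg D1 (\<lambda>l. JG l xt)) *v bavg D2 (\<lambda>l. gF l (bavg D1 (\<lambda>l. G l xt)))"

definition sc_step :: "nat \<Rightarrow> (nat \<Rightarrow> real^'n \<Rightarrow> real^'m) \<Rightarrow> (nat \<Rightarrow> real^'n \<Rightarrow> real^'n^'m)
    \<Rightarrow> (nat \<Rightarrow> real^'m \<Rightarrow> real^'m) \<Rightarrow> nat \<Rightarrow> real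
    \<Rightarrow> real^'n \<Rightarrow> nat list \<Rightarrow> nat list \<Rightarrow> real^'n \<Rightarrow> (real^'n) pmf" where
  "sc_step n G JG gF A \<eta> xt D1 D2 x =
     bind_pmf (batch_pmf n A) (\<lambda>Ab.
     bind_pmf (pmf_of_set {..<n}) (\<lambda>i.
     bind_pmf (pmf_of_set {..<n}) (\<lambda>j.
       return_pmf (x - \<eta> *\<^sub>R
         (transpose (JG j x) *v gF i (Ghat G Ab D1 xt x)
          - transpose (JG j xt) *v gF i (bavg D1 (\<lambda>l. G l xt))
          + gradD G JG gF D1 D2 xt)))))"

fun sc_inner :: "nat \<Rightarrow> (nat \<Rightarrow> real^'n \<Rightarrow> real^'m) \<Rightarrow> (nat \<Rightarrow> real^'n \<Rightarrow> real^'n^'m)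
    \<Rightarrow> (nat \<Rightarrow> real^'m \<Rightarrow> real^'m) \<Rightarrow> nat \<Rightarrow> real
    \<Rightarrow> nat \<Rightarrow> real^'n \<Rightarrow> nat list \<Rightarrow> nat list \<Rightarrow> (real^'n) pmf" where
  "sc_inner n G JG gF A \<eta> 0 xt D1 D2 = return_pmf xt"
| "sc_inner n G JG gF A \<eta> (Suc k) xt D1 D2 =
     bind_pmf (sc_inner n G JG gF A \<eta> k xt D1 D2) (sc_step n G JG gF A \<eta> xt D1 D2)"

fun sc_outer :: "nat \<Rightarrow> (nat \<Rightarrow> real^'n \<Rightarrow> real^'m) \<Rightarrow> (nat \<Rightarrow> real^'n \<Rightarrow> real^'n^'m)
    \<Rightarrow> (nat \<Rightarrow> real^'m \<Rightarrow> real^'m) \<Rightarrow> nat \<Rightarrow> nat \<Rightarrow> real \<Rightarrow> nat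
    \<Rightarrow> real^'n \<Rightarrow> nat \<Rightarrow> (real^'n) pmf" where
  "sc_outer n G JG gF A D \<eta> K x0 0 = return_pmf x0"
| "sc_outer n G JG gF A D \<eta> K x0 (Suc s) =
     bind_pmf (sc_outer n G JG gF A D \<eta> K x0 s) (\<lambda>xt.
     bind_pmf (batch_pmf n D) (\<lambda>D1.
     bind_pmf (batch_pmf n D) (\<lambda>D2. sc_inner n G JG gF A \<eta> K xt D1 D2)))"

definition sc_state :: "nat \<Rightarrow> (nat \<Rightarrow> real^'n \<Rightarrow> real^'m) \<Rightarrow> (nat \<Rightarrow> real^'n \<Rightarrow> real^'n^'m)
    \<Rightarrow> (nat \<Rightarrow> real^'m \<Rightarrow> real^'m) \<Rightarrow> nat \<Rightarrow> nat \<Rightarrow> real \<Rightarrow> nat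
    \<Rightarrow> real^'n \<Rightarrow> nat \<Rightarrow> nat \<Rightarrow> ((real^'n) \<times> nat list \<times> (real^'n)) pmf" where
  "sc_state n G JG gF A D \<eta> K x0 s k =
     bind_pmf (sc_outer n G JG gF A D \<eta> K x0 s) (\<lambda>xt.
     bind_pmf (batch_pmf n D) (\<lambda>D1.
     bind_pmf (batch_pmf n D) (\<lambda>D2.
       map_pmf (\<lambda>x. (xt, D1, x)) (sc_inner n G JG gF A \<eta> k xt D1 D2))))"

end

theory Submission
  imports Defs
begin

(* Ghat_k - G(x_k) is the sum of the mini-batch error of the increment G(x_k) - G(xt) and the
   reference-batch error of G(xt). For m < n i.i.d. uniform indices the batch mean of f has
   expected squared error equal to 1/m times the population variance of f, which is at most its
   second moment. Since G_j is B_G-Lipschitz the second moment of the increment is at most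
   B_G^2 |x_k - xt|^2, and (A6) bounds the variance of G(xt) by H_1; when m \<ge> n the full index set
   is used and the error vanishes. The two errors are combined by |u + v|^2 \<le> 2|u|^2 + 2|v|^2. *)

lemma finite_set_pmf_iid_list: "finite (set_pmf p) \<Longrightarrow> finite (set_pmf (iid_list m p))"
  by (induction m) auto

lemma length_of_set_pmf_iid_list: "S \<in> set_pmf (iid_list m p) \<Longrightarrow> length S = m"
  by (induction m arbitrary: S) auto

lemma set_pmf_of_set_lessThan: "0 < n \<Longrightarrow> set_pmf (pmf_of_set {..<(n::nat)}) = {..<n}"
  by (subst set_pmf_of_set) auto

lemma finite_set_pmf_batch_pmf: "finite (set_pmf (batch_pmf n m))"
  unfolding batch_pmf_def by (auto intro!: finite_set_pmf_iid_list simp: set_pmf_of_set_lessThan)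

lemma finite_set_pmf_sc_inner: "0 < n \<Longrightarrow> finite (set_pmf (sc_inner n G JG gF A \<eta> k xt D1 D2))"
  by (induction k) (auto simp: sc_step_def finite_set_pmf_batch_pmf set_pmf_of_set_lessThan)

lemma finite_set_pmf_sc_outer: "0 < n \<Longrightarrow> finite (set_pmf (sc_outer n G JG gF A D \<eta> K x0 s))"
  by (induction s) (auto simp: finite_set_pmf_batch_pmf finite_set_pmf_sc_inner)

lemma finite_set_pmf_sc_state: "0 < n \<Longrightarrow> finite (set_pmf (sc_state n G JG gF A D \<eta> K x0 s k))"
  unfolding sc_state_def
  by (auto simp: finite_set_pmf_batch_pmf finite_set_pmf_sc_inner finite_set_pmf_sc_outer)

lemma expectation_finite_nonneg_eq_nn_integral:
  fixes f :: "'a \<Rightarrow> real"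
  assumes "finite (set_pmf M)" "\<And>y. 0 \<le> f y"
  shows "ennreal (measure_pmf.expectation M f) = (\<integral>\<^sup>+x. ennreal (f x) \<partial>M)"
  using assms by (subst nn_integral_eq_integral) (auto intro: integrable_measure_pmf_finite)

lemma expectation_bind_pmf_finite:
  fixes f :: "'b \<Rightarrow> real"
  assumes M: "finite (set_pmf M)" and N: "\<And>x. x \<in> set_pmf M \<Longrightarrow> finite (set_pmf (N x))"
    and f: "\<And>y. 0 \<le> f y"
  shows "measure_pmf.expectation (bind_pmf M N) f
       = measure_pmf.expectation M (\<lambda>x. measure_pmf.expectation (N x) f)"
proof -
  have fin: "finite (set_pmf (bind_pmf M N))" using M N by auto
  have "ennreal (measure_pmf.expectation (bind_pmf M N) f)
      = (\<integral>\<^sup>+x. \<integral>\<^sup>+y. ennreal (f y) \<partial>N x \<partial>M)"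
    using expectation_finite_nonneg_eq_nn_integral[OF fin f] by simp
  also have "\<dots> = (\<integral>\<^sup>+x. ennreal (measure_pmf.expectation (N x) f) \<partial>M)"
    by (intro nn_integral_cong_AE)
      (auto simp: AE_measure_pmf_iff expectation_finite_nonneg_eq_nn_integral N f)
  also have "\<dots> = ennreal (measure_pmf.expectation M (\<lambda>x. measure_pmf.expectation (N x) f))"
    by (rule expectation_finite_nonneg_eq_nn_integral[symmetric]) (auto intro: M f integral_nonneg_AE)
  finally show ?thesis by (simp add: integral_nonneg_AE f)
qed

lemma expectation_pair_pmf_finite:
  fixes f :: "'a \<times> 'b \<Rightarrow> real"
  assumes "finite (set_pmf M)" "finite (set_pmf N)" "\<And>y. 0 \<le> f y"
  shows "measure_pmf.expectation (pair_pmf M N) f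
       = measure_pmf.expectation M (\<lambda>x. measure_pmf.expectation N (\<lambda>y. f (x, y)))"
  unfolding pair_pmf_def using assms
  by (subst expectation_bind_pmf_finite)
    (auto intro!: Bochner_Integration.integral_cong simp: expectation_bind_pmf_finite)

lemma norm_add_square_le: "(norm (u + v :: 'a::real_normed_vector))\<^sup>2 \<le> 2 * (norm u)\<^sup>2 + 2 * (norm v)\<^sup>2"
proof -
  have "(norm (u + v))\<^sup>2 \<le> (norm u + norm v)\<^sup>2"
    by (simp add: norm_triangle_ineq power_mono)
  also have "\<dots> \<le> 2 * (norm u)\<^sup>2 + 2 * (norm v)\<^sup>2"
    using sum_squares_ge_zero[of "norm u - norm v" 0] by (simp add: power2_eq_square algebra_simps)
  finally show ?thesis .
qed

lemma sum_norm_add_square_centered: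
  fixes g :: "nat \<Rightarrow> 'a::real_inner"
  assumes "(\<Sum>i<n. g i) = 0"
  shows "(\<Sum>i<n. (norm (g i + t))\<^sup>2) = (\<Sum>i<n. (norm (g i))\<^sup>2) + real n * (norm t)\<^sup>2"
proof -
  have "(\<Sum>i<n. (norm (g i + t))\<^sup>2) = (\<Sum>i<n. (norm (g i))\<^sup>2 + 2 * (g i \<bullet> t) + (norm t)\<^sup>2)"
    by (rule sum.cong) (simp_all add: power2_norm_eq_inner inner_add inner_commute algebra_simps)
  also have "\<dots> = (\<Sum>i<n. (norm (g i))\<^sup>2) + 2 * ((\<Sum>i<n. g i) \<bullet> t) + real n * (norm t)\<^sup>2"
    by (simp add: sum.distrib sum_distrib_left inner_sum_left)
  finally show ?thesis using assms by simp
qed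

lemma sum_norm_square_deviation_le:
  fixes f :: "nat \<Rightarrow> 'a::real_inner"
  assumes "0 < n"
  shows "(\<Sum>i<n. (norm (f i - favg n f))\<^sup>2) \<le> (\<Sum>i<n. (norm (f i))\<^sup>2)"
proof -
  let ?\<mu> = "favg n f"
  have sum_eq: "(\<Sum>i<n. f i) = real n *\<^sub>R ?\<mu>" using assms by (simp add: favg_def)
  have "(\<Sum>i<n. (norm (f i - ?\<mu>))\<^sup>2) = (\<Sum>i<n. (norm (f i))\<^sup>2 - 2 * (f i \<bullet> ?\<mu>) + (norm ?\<mu>)\<^sup>2)"
    by (rule sum.cong) (simp_all add: power2_norm_eq_inner inner_diff inner_commute algebra_simps)
  also have "\<dots> = (\<Sum>i<n. (norm (f i))\<^sup>2) - 2 * ((\<Sum>i<n. f i) \<bullet> ?\<mu>) + real n * (norm ?\<mu>)\<^sup>2"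
    by (simp add: sum.distrib sum_subtractf sum_distrib_left inner_sum_left)
  also have "\<dots> = (\<Sum>i<n. (norm (f i))\<^sup>2) - real n * (norm ?\<mu>)\<^sup>2"
    unfolding sum_eq by (simp add: power2_norm_eq_inner)
  finally show ?thesis by simp
qed

lemma sum_favg_deviation_eq_0:
  assumes "0 < n"
  shows "(\<Sum>i<n. f i - favg n f) = (0::'a::real_vector)"
  using assms by (simp add: sum_subtractf favg_def sum_constant_scaleR)

lemma expectation_iid_list_norm_sum_list_square:
  fixes g :: "nat \<Rightarrow> 'a::euclidean_space"
  assumes n: "0 < n" and g0: "(\<Sum>i<n. g i) = 0"
  shows "measure_pmf.expectation (iid_list m (pmf_of_set {..<n})) (\<lambda>S. (norm (sum_list (map g S)))\<^sup>2)
       = real m * ((\<Sum>i<n. (norm (g i))\<^sup>2) / real n)"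
proof (induction m)
  case 0
  then show ?case by simp
next
  case (Suc m)
  let ?p = "pmf_of_set {..<n::nat}"
  let ?q = "iid_list m ?p"
  let ?E = "\<lambda>i. measure_pmf.expectation ?q (\<lambda>S. (norm (g i + sum_list (map g S)))\<^sup>2)"
  have fin_q: "finite (set_pmf ?q)"
    using n by (intro finite_set_pmf_iid_list) (auto simp: set_pmf_of_set_lessThan)
  have "measure_pmf.expectation (iid_list (Suc m) ?p) (\<lambda>S. (norm (sum_list (map g S)))\<^sup>2)
      = measure_pmf.expectation ?p ?E"
    using n fin_q by (simp add: expectation_bind_pmf_finite set_pmf_of_set_lessThan)
  also have "\<dots> = (\<Sum>i<n. ?E i) / real n"
    using n by (subst integral_pmf_of_set) auto
  also have "(\<Sum>i<n. ?E i) = measure_pmf.expectation ?q (\<lambda>S. \<Sum>i<n. (norm (g i + sum_list (map g S)))\<^sup>2)"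
    by (rule Bochner_Integration.integral_sum[symmetric])
      (auto intro: integrable_measure_pmf_finite fin_q)
  also have "\<dots> = (\<Sum>i<n. (norm (g i))\<^sup>2)
      + real n * measure_pmf.expectation ?q (\<lambda>S. (norm (sum_list (map g S)))\<^sup>2)"
    by (simp add: sum_norm_add_square_centered[OF g0] integrable_measure_pmf_finite[OF fin_q])
  finally show ?case using Suc n by (simp add: field_simps)
qed

lemma bavg_upt_eq_favg: "bavg [0..<n] f = favg n f"
  unfolding bavg_def favg_def by (simp add: sum_list_distinct_conv_sum_set atLeast0LessThan)

lemma bavg_diff: "bavg S (\<lambda>l. u l - v l) = bavg S u - bavg S v"
  unfolding bavg_def by (simp add: sum_list_subtractf algebra_simps)

lemma favg_diff: "favg n (\<lambda>l. u l - v l) = favg n u - favg n v"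
  unfolding favg_def by (simp add: sum_subtractf algebra_simps)

lemma bavg_minus_favg_eq:
  assumes "length S = m" "0 < m"
  shows "bavg S f - favg n f = (1 / real m) *\<^sub>R sum_list (map (\<lambda>l. f l - favg n f) S)"
proof -
  have "sum_list (map (\<lambda>l. f l - favg n f) S) = sum_list (map f S) - real m *\<^sub>R favg n f"
    using assms(1) by (induction S arbitrary: m) (auto simp: algebra_simps)
  then show ?thesis using assms by (simp add: bavg_def scaleR_diff_right)
qed

lemma expectation_batch_pmf_error:
  fixes f :: "nat \<Rightarrow> 'a::euclidean_space"
  assumes n: "0 < n" and m: "0 < m"
  shows "measure_pmf.expectation (batch_pmf n m) (\<lambda>S. (norm (bavg S f - favg n f))\<^sup>2)
       = of_bool (m < n) / real m * ((\<Sum>i<n. (norm (f i - favg n f))\<^sup>2) / real n)"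
proof (cases "m < n")
  case True
  let ?g = "\<lambda>l. f l - favg n f"
  let ?q = "iid_list m (pmf_of_set {..<n})"
  have "measure_pmf.expectation (batch_pmf n m) (\<lambda>S. (norm (bavg S f - favg n f))\<^sup>2)
      = measure_pmf.expectation ?q (\<lambda>S. (1 / real m)\<^sup>2 * (norm (sum_list (map ?g S)))\<^sup>2)"
    unfolding batch_pmf_def if_P[OF True]
    by (rule integral_cong_AE)
      (auto simp: AE_measure_pmf_iff bavg_minus_favg_eq[OF length_of_set_pmf_iid_list m] power_divide)
  also have "\<dots> = (1 / real m)\<^sup>2 * (real m * ((\<Sum>i<n. (norm (?g i))\<^sup>2) / real n))"
    by (simp add: expectation_iid_list_norm_sum_list_square[OF n sum_favg_deviation_eq_0[OF n]])
  finally show ?thesis using True m by (simp add: power2_eq_square field_simps)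
next
  case False
  then show ?thesis unfolding batch_pmf_def by (simp add: bavg_upt_eq_favg)
qed

lemma expectation_batch_pmf_error_le:
  fixes f :: "nat \<Rightarrow> 'a::euclidean_space"
  assumes n: "0 < n" and m: "0 < m" and bound: "\<And>i. i < n \<Longrightarrow> norm (f i) \<le> c"
  shows "measure_pmf.expectation (batch_pmf n m) (\<lambda>S. (norm (bavg S f - favg n f))\<^sup>2)
       \<le> of_bool (m < n) / real m * c\<^sup>2"
proof -
  have "(\<Sum>i<n. (norm (f i))\<^sup>2) \<le> (\<Sum>i<n. c\<^sup>2)"
    by (intro sum_mono power_mono bound) auto
  with sum_norm_square_deviation_le[OF n, of f]
  have "(\<Sum>i<n. (norm (f i - favg n f))\<^sup>2) \<le> (\<Sum>i<n. c\<^sup>2)"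
    by (rule order_trans)
  then have "(\<Sum>i<n. (norm (f i - favg n f))\<^sup>2) / real n \<le> c\<^sup>2"
    using n by (simp add: divide_le_eq algebra_simps)
  then show ?thesis
    unfolding expectation_batch_pmf_error[OF n m] by (intro mult_left_mono) auto
qed

lemma norm_diff_le_of_onorm_derivative_le:
  assumes "\<And>x. (g has_derivative (\<lambda>h. J x *v h)) (at x)" and "\<And>x. onorm (\<lambda>h. J x *v h) \<le> B"
  shows "norm (g x - g y) \<le> B * norm (x - y)"
  using assms by (intro differentiable_bound[where S=UNIV and f' = "\<lambda>x h. J x *v h"]) auto

lemma Ghat_minus_favg:
  "Ghat G Ab D1 xt x - favg n (\<lambda>j. G j x)
     = (bavg Ab (\<lambda>l. G l x - G l xt) - favg n (\<lambda>l. G l x - G l xt))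
       + (bavg D1 (\<lambda>l. G l xt) - favg n (\<lambda>l. G l xt))"
  unfolding Ghat_def bavg_diff favg_diff by (simp add: algebra_simps)

lemma expectation_Ghat_error_le:
  fixes G :: "nat \<Rightarrow> real^'n \<Rightarrow> real^'m"
  assumes n: "0 < n" and A: "0 < A"
    and lip: "\<And>j. j < n \<Longrightarrow> norm (G j x - G j xt) \<le> B * norm (x - xt)"
  shows "measure_pmf.expectation (batch_pmf n A) (\<lambda>Ab. (norm (Ghat G Ab D1 xt x - favg n (\<lambda>j. G j x)))\<^sup>2)
       \<le> 2 * (of_bool (A < n) / real A) * B\<^sup>2 * (norm (x - xt))\<^sup>2
         + 2 * (norm (bavg D1 (\<lambda>l. G l xt) - favg n (\<lambda>l. G l xt)))\<^sup>2"
proof -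
  let ?a = "\<lambda>Ab. bavg Ab (\<lambda>l. G l x - G l xt) - favg n (\<lambda>l. G l x - G l xt)"
  let ?b = "bavg D1 (\<lambda>l. G l xt) - favg n (\<lambda>l. G l xt)"
  have int: "integrable (batch_pmf n A) f" for f :: "nat list \<Rightarrow> real"
    by (rule integrable_measure_pmf_finite[OF finite_set_pmf_batch_pmf])
  have "measure_pmf.expectation (batch_pmf n A) (\<lambda>Ab. (norm (Ghat G Ab D1 xt x - favg n (\<lambda>j. G j x)))\<^sup>2)
      \<le> measure_pmf.expectation (batch_pmf n A) (\<lambda>Ab. 2 * (norm (?a Ab))\<^sup>2 + 2 * (norm ?b)\<^sup>2)"
    unfolding Ghat_minus_favg by (intro integral_mono int norm_add_square_le)
  also have "\<dots> = 2 * measure_pmf.expectation (batch_pmf n A) (\<lambda>Ab. (norm (?a Ab))\<^sup>2) + 2 * (norm ?b)\<^sup>2"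
    by (simp add: int)
  also have "measure_pmf.expectation (batch_pmf n A) (\<lambda>Ab. (norm (?a Ab))\<^sup>2)
      \<le> of_bool (A < n) / real A * (B * norm (x - xt))\<^sup>2"
    using lip by (intro expectation_batch_pmf_error_le[OF n A]) auto
  finally show ?thesis by (simp add: power_mult_distrib)
qed

lemma expectation_sc_state_reference_error_le:
  fixes G :: "nat \<Rightarrow> real^'n \<Rightarrow> real^'m"
  assumes n: "0 < n" and D: "0 < D"
    and var: "\<And>x. (1 / real n) * (\<Sum>i<n. (norm (favg n (\<lambda>j. G j x) - G i x))\<^sup>2) \<le> H1"
  shows "measure_pmf.expectation (sc_state n G JG gF A D \<eta> K x0 s k)
           (\<lambda>(xt, D1, x). (norm (bavg D1 (\<lambda>l. G l xt) - favg n (\<lambda>l. G l xt)))\<^sup>2)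
       \<le> of_bool (D < n) / real D * H1"
proof -
  let ?c = "of_bool (D < n) / real D"
  have batch: "measure_pmf.expectation (batch_pmf n D)
      (\<lambda>D1. (norm (bavg D1 (\<lambda>l. G l xt) - favg n (\<lambda>l. G l xt)))\<^sup>2) \<le> ?c * H1" for xt
  proof -
    have "(\<Sum>i<n. (norm (G i xt - favg n (\<lambda>l. G l xt)))\<^sup>2) / real n \<le> H1"
      using var[of xt] by (simp add: norm_minus_commute)
    then show ?thesis unfolding expectation_batch_pmf_error[OF n D] by (intro mult_left_mono) auto
  qed
  have "measure_pmf.expectation (sc_state n G JG gF A D \<eta> K x0 s k)
        (\<lambda>(xt, D1, x). (norm (bavg D1 (\<lambda>l. G l xt) - favg n (\<lambda>l. G l xt)))\<^sup>2)
      = measure_pmf.expectation (sc_outer n G JG gF A D \<eta> K x0 s) (\<lambda>xt.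
          measure_pmf.expectation (batch_pmf n D)
            (\<lambda>D1. (norm (bavg D1 (\<lambda>l. G l xt) - favg n (\<lambda>l. G l xt)))\<^sup>2))"
    unfolding sc_state_def
    by (simp add: expectation_bind_pmf_finite finite_set_pmf_sc_outer finite_set_pmf_batch_pmf
        finite_set_pmf_sc_inner n split_beta)
  also have "\<dots> \<le> measure_pmf.expectation (sc_outer n G JG gF A D \<eta> K x0 s) (\<lambda>xt. ?c * H1)"
    by (intro integral_mono batch integrable_measure_pmf_finite finite_set_pmf_sc_outer n)
  finally show ?thesis by simp
qed

theorem lemma3:
  fixes n A D K S s k :: nat and \<eta> B_G L_G H1 H2 :: real
    and G :: "nat \<Rightarrow> real^'n \<Rightarrow> real^'m"
    and JG :: "nat \<Rightarrow> real^'n \<Rightarrow> real^'n^'m"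
    and F :: "nat \<Rightarrow> real^'m \<Rightarrow> real"
    and gF :: "nat \<Rightarrow> real^'m \<Rightarrow> real^'m"
    and x0 :: "real^'n"
  assumes n_pos: "0 < n" and A_pos: "0 < A" and AD: "A \<le> D" and eta_pos: "0 < \<eta>"
    and s_lt: "s < S" and k_lt: "k < K"
    and G_deriv: "\<forall>j<n. \<forall>x. (G j has_derivative (\<lambda>h. JG j x *v h)) (at x)"
    and F_deriv: "\<forall>i<n. \<forall>y. (F i has_derivative (\<lambda>h. gF i y \<bullet> h)) (at y)"
    and A2_bound: "\<forall>j<n. \<forall>x. onorm (\<lambda>h. JG j x *v h) \<le> B_G"
    and A2_lip: "\<forall>j<n. \<forall>x y. onorm (\<lambda>h. (JG j x - JG j y) *v h) \<le> L_G * norm (x - y)"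
    and A6_1: "\<forall>x. (1 / real n) * (\<Sum>i<n. (norm (favg n (\<lambda>j. G j x) - G i x))\<^sup>2) \<le> H1"
    and A6_2: "\<forall>x y. (1 / (real n)\<^sup>2) * (\<Sum>i<n. \<Sum>j<n.
                 (norm (transpose (favg n (\<lambda>l. JG l x)) *v favg n (\<lambda>l. gF l y)
                        - transpose (JG j x) *v gF i y))\<^sup>2) \<le> H2"
  shows "measure_pmf.expectation
           (pair_pmf (sc_state n G JG gF A D \<eta> K x0 s k) (batch_pmf n A))
           (\<lambda>((xt, D1, x), Ab). (norm (Ghat G Ab D1 xt x - favg n (\<lambda>j. G j x)))\<^sup>2)
         \<le> 4 * (of_bool (A < n) / real A + of_bool (D < n) / real D) * B_G\<^sup>2
             * measure_pmf.expectation (sc_state n G JG gF A D \<eta> K x0 s k)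
                 (\<lambda>(xt, D1, x). (norm (x - xt))\<^sup>2)
           + 2 * (of_bool (D < n) / real D) * H1"
proof -
  let ?P = "sc_state n G JG gF A D \<eta> K x0 s k"
  let ?cA = "of_bool (A < n) / real A" and ?cD = "of_bool (D < n) / real D"
  let ?dist = "\<lambda>(xt, D1, x). (norm (x - xt))\<^sup>2"
  let ?ref = "\<lambda>(xt, D1, x). (norm (bavg D1 (\<lambda>l. G l xt) - favg n (\<lambda>l. G l xt)))\<^sup>2"
  have D_pos: "0 < D" using A_pos AD by simp
  have int: "integrable ?P f" for f :: "_ \<Rightarrow> real"
    by (rule integrable_measure_pmf_finite[OF finite_set_pmf_sc_state[OF n_pos]])
  have lip: "norm (G j x - G j y) \<le> B_G * norm (x - y)" if "j < n" for j x y
    using G_deriv A2_bound that by (intro norm_diff_le_of_onorm_derivative_le) auto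
  have "measure_pmf.expectation (pair_pmf ?P (batch_pmf n A))
          (\<lambda>((xt, D1, x), Ab). (norm (Ghat G Ab D1 xt x - favg n (\<lambda>j. G j x)))\<^sup>2)
      = measure_pmf.expectation ?P (\<lambda>(xt, D1, x). measure_pmf.expectation (batch_pmf n A)
          (\<lambda>Ab. (norm (Ghat G Ab D1 xt x - favg n (\<lambda>j. G j x)))\<^sup>2))"
    by (subst expectation_pair_pmf_finite)
      (auto intro!: Bochner_Integration.integral_cong split: prod.split
        simp: finite_set_pmf_sc_state n_pos finite_set_pmf_batch_pmf)
  also have "\<dots> \<le> measure_pmf.expectation ?P (\<lambda>u. 2 * ?cA * B_G\<^sup>2 * ?dist u + 2 * ?ref u)"
    by (intro integral_mono int)
      (unfold case_prod_beta, rule expectation_Ghat_error_le[OF n_pos A_pos lip])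
  also have "\<dots> = 2 * ?cA * B_G\<^sup>2 * measure_pmf.expectation ?P ?dist + 2 * measure_pmf.expectation ?P ?ref"
    by (simp add: int)
  also have "measure_pmf.expectation ?P ?ref \<le> ?cD * H1"
    using A6_1 by (intro expectation_sc_state_reference_error_le[OF n_pos D_pos]) auto
  also have "2 * ?cA * B_G\<^sup>2 * measure_pmf.expectation ?P ?dist
      \<le> 4 * (?cA + ?cD) * B_G\<^sup>2 * measure_pmf.expectation ?P ?dist"
    using A_pos D_pos
    by (intro mult_right_mono integral_nonneg_AE) (auto simp: split_beta field_simps)
  finally show ?thesis by simp
qed

end
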